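(* Let $n$, $k$, $t$, $s$ be positive integers with $k\geq t+1$ and $n\geq 2k$, and let $V$ be an $n$-dimensional vector space over $\mathbb{F}_q$. Suppose $\mathcal{F}\subseteq{V\brack k}$ is almost $t$-intersecting and $S\in{V\brack s}$. If there exists $F\in\mathcal{F}$ with $\dim(F\cap S)=m<t$, then there is $R\in{V\brack s+t-m}$ with $S\subseteq R$ such that $$|\mathcal{F}_S|\leq{k-t+1\brack 1}^{t-m}|\mathcal{F}_R|+1.$$
   Context: $q$ is a prime power; ${W\brack k}$ is the set of $k$-dimensional subspaces of $W$ and ${m\brack r}$ the Gaussian binomial coefficient $\prod_{i=0}^{r-1}\frac{q^{m-i}-1}{q^{r-i}-1}$. A family $\mathcal{F}\subseteq{V\brack k}$ is almost $t$-intersecting if for each $F\in\mathcal{F}$ there is at most one $F'\in\mathcal{F}$ with $\dim(F\cap F')<t$. For a subspace $A$ of $V$, $\mathcal{F}_A=\{F\in\mathcal{F}: A\subseteq F\}$. *)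

theory Defs
  imports "HOL-Analysis.Analysis"
begin

text \<open>The ambient space V is the n-dimensional space 'a^'n over the finite field 'a
 (so q = CARD('a), n = CARD('n)).\<close>

definition subspaces_dim :: "nat \<Rightarrow> ('a::field ^ 'n) set set" where
  "subspaces_dim k = {W. vec.subspace W \<and> vec.dim W = k}"

definition gauss_binom :: "nat \<Rightarrow> nat \<Rightarrow> nat \<Rightarrow> real" where
  "gauss_binom q m r = (\<Prod>i<r. (real q ^ (m - i) - 1) / (real q ^ (r - i) - 1))"

definition almost_t_intersecting :: "nat \<Rightarrow> ('a::field ^ 'n) set set \<Rightarrow> bool" where
  "almost_t_intersecting t \<F> \<longleftrightarrow>
     (\<forall>F\<in>\<F>. card {F'\<in>\<F>. vec.dim (F \<inter> F') < t} \<le> 1)"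

definition fam_containing :: "('a ^ 'n) set set \<Rightarrow> ('a ^ 'n) set \<Rightarrow> ('a ^ 'n) set set" where
  "fam_containing \<F> A = {F\<in>\<F>. A \<subseteq> F}"

end

(* All members of the family except at most one meet F in dimension at least t; call them
   the close members. Fix a complement Y of F \<inter> S inside F of dimension k - t + 1. Every close
   member containing S meets Y nontrivially, so it contains at least q - 1 of the q^(k-t+1) - 1
   nonzero vectors of Y; by double counting some nonzero w \<in> Y lies in at least a
   (q - 1)/(q^(k-t+1) - 1) fraction of them. Adjoining w to S raises dim (F \<inter> S) by one, and after
   t - m such steps we reach R. *)

theory Submission
  imports Defs
begin

lemma card_field_ge_2: "2 \<le> CARD('a::{field,finite})"
proof -
  have "card {0::'a, 1} \<le> CARD('a)" by (rule card_mono) auto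
  thus ?thesis by simp
qed

lemma gauss_binom_1: "gauss_binom q m 1 = (real q ^ m - 1) / (real q - 1)"
  by (simp add: gauss_binom_def)

lemma gauss_binom_1_nonneg: "0 \<le> gauss_binom q m 1"
  unfolding gauss_binom_1
proof (cases "q = 0")
  case True
  then show "0 \<le> (real q ^ m - 1) / (real q - 1)" by (cases m) simp_all
next
  case False
  then have "1 \<le> real q ^ m" by (simp add: one_le_power)
  then show "0 \<le> (real q ^ m - 1) / (real q - 1)" using False by simp
qed

lemma card_span_le:
  fixes B :: "('a::{field,finite} ^ 'n) set"
  assumes "finite B"
  shows "card (vec.span B) \<le> CARD('a) ^ card B"
proof -
  let ?comb = "\<lambda>u. \<Sum>v\<in>B. u v *s v"
  have "vec.span B \<subseteq> ?comb ` (B \<rightarrow>\<^sub>E UNIV)"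
  proof
    fix x assume "x \<in> vec.span B"
    then obtain u where x: "x = ?comb u" using vec.span_finite[OF assms] by auto
    have "x = ?comb (restrict u B)" unfolding x by (rule sum.cong) auto
    moreover have "restrict u B \<in> B \<rightarrow>\<^sub>E UNIV" by auto
    ultimately show "x \<in> ?comb ` (B \<rightarrow>\<^sub>E UNIV)" by blast
  qed
  then have "card (vec.span B) \<le> card (?comb ` (B \<rightarrow>\<^sub>E (UNIV :: 'a set)))"
    by (intro card_mono finite_imageI finite_PiE assms) auto
  also have "\<dots> \<le> card (B \<rightarrow>\<^sub>E (UNIV :: 'a set))"
    by (rule card_image_le) (auto intro: finite_PiE assms)
  also have "\<dots> = CARD('a) ^ card B" using assms by (simp add: card_PiE)
  finally show ?thesis .
qed

lemma card_subspace_le: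
  fixes U :: "('a::{field,finite} ^ 'n) set"
  assumes "vec.subspace U"
  shows "card U \<le> CARD('a) ^ vec.dim U"
proof -
  obtain B where "B \<subseteq> U" "vec.independent B" "U \<subseteq> vec.span B" "card B = vec.dim U"
    using vec.basis_exists by blast
  with assms have "U = vec.span B" and "finite B"
    using vec.span_minimal[of B U] vec.finiteI_independent by auto
  then show ?thesis using card_span_le \<open>card B = vec.dim U\<close> by metis
qed

lemma card_nonzero_subspace_ge:
  fixes U :: "('a::{field,finite} ^ 'n) set"
  assumes "vec.subspace U" and "\<not> U \<subseteq> {0}"
  shows "CARD('a) - 1 \<le> card (U - {0})"
proof -
  obtain v where v: "v \<in> U" "v \<noteq> 0" using assms(2) by blast
  have "(\<lambda>c. c *s v) ` (UNIV - {0}) \<subseteq> U - {0}"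
    using v assms(1) by (auto intro: vec.subspace_scale)
  then have "card ((\<lambda>c. c *s v) ` (UNIV - {0})) \<le> card (U - {0})"
    by (intro card_mono) auto
  moreover have "inj_on (\<lambda>c. c *s v) (UNIV - {0})"
    using v(2) by (auto intro: inj_onI)
  ultimately show ?thesis by (simp add: card_image card_Diff_singleton)
qed

lemma subspace_Int_nonzero:
  fixes A B F :: "('a::field ^ 'n) set"
  assumes "vec.subspace A" "vec.subspace B" "A \<subseteq> F" "B \<subseteq> F" "vec.subspace F"
    and "vec.dim F < vec.dim A + vec.dim B"
  shows "\<not> A \<inter> B \<subseteq> {0}"
proof -
  have "{x + y |x y. x \<in> A \<and> y \<in> B} \<subseteq> F"
    using assms by (auto intro: vec.subspace_add)
  then have "vec.dim {x + y |x y. x \<in> A \<and> y \<in> B} \<le> vec.dim F" by (rule vec.dim_subset)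
  then have "vec.dim (A \<inter> B) \<noteq> 0"
    using vec.dim_sums_Int[OF assms(1,2)] assms(6) by linarith
  then show ?thesis by simp
qed

lemma card_nonzero_Int_ge:
  fixes F G Y :: "('a::{field,finite} ^ 'n) set"
  assumes "vec.subspace F" "vec.subspace G" "vec.subspace Y" "Y \<subseteq> F"
    and "vec.dim F < vec.dim (F \<inter> G) + vec.dim Y"
  shows "CARD('a) - 1 \<le> card (G \<inter> Y - {0})"
proof -
  have "\<not> (F \<inter> G) \<inter> Y \<subseteq> {0}"
    using assms by (intro subspace_Int_nonzero vec.subspace_inter) auto
  then have "\<not> G \<inter> Y \<subseteq> {0}" by auto
  then show ?thesis using assms(2,3) by (intro card_nonzero_subspace_ge vec.subspace_inter)
qed

lemma span_Int_span_le_0: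
  fixes A B :: "('a::field ^ 'n) set"
  assumes "vec.independent (A \<union> B)" "A \<inter> B = {}"
  shows "vec.span A \<inter> vec.span B \<subseteq> {0}"
proof -
  have fin: "finite A" "finite B"
    using assms(1) vec.finiteI_independent vec.independent_mono by blast+
  have "vec.dim {x + y |x y. x \<in> vec.span A \<and> y \<in> vec.span B} = card A + card B"
    using vec.dim_span_eq_card_independent[OF assms(1)] card_Un_disjoint[OF fin assms(2)]
    by (simp add: vec.span_Un)
  moreover have "vec.dim (vec.span A) = card A" "vec.dim (vec.span B) = card B"
    using assms(1) vec.independent_mono vec.dim_span_eq_card_independent by blast+
  ultimately have "vec.dim (vec.span A \<inter> vec.span B) = 0"
    using vec.dim_sums_Int[of "vec.span A" "vec.span B"] by simp
  then show ?thesis by simp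
qed

lemma subspace_complement_exists:
  fixes F S :: "('a::field ^ 'n) set"
  assumes "vec.subspace F" "vec.subspace S" "r + vec.dim (F \<inter> S) \<le> vec.dim F"
  obtains Y where "vec.subspace Y" "Y \<subseteq> F" "Y \<inter> S \<subseteq> {0}" "vec.dim Y = r"
proof -
  obtain C where C: "C \<subseteq> F \<inter> S" "vec.independent C" "F \<inter> S \<subseteq> vec.span C"
    "card C = vec.dim (F \<inter> S)"
    using vec.basis_exists by blast
  obtain B where B: "C \<subseteq> B" "B \<subseteq> F" "vec.independent B" "F \<subseteq> vec.span B"
    using vec.maximal_independent_subset_extend[of C F] C by auto
  have "finite B" using B(3) vec.finiteI_independent by blast
  have "card B = vec.dim F" using B(2-4) vec.basis_card_eq_dim by blast
  with \<open>finite B\<close> B(1) C(4) assms(3) have "r \<le> card (B - C)"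
    by (simp add: card_Diff_subset finite_subset)
  then obtain D where D: "D \<subseteq> B - C" "card D = r"
    using obtain_subset_with_card_n by metis
  have "D \<union> C \<subseteq> B" using D B(1) by auto
  then have indep: "vec.independent (D \<union> C)"
    using vec.independent_mono[OF B(3)] by blast
  have "vec.span C = F \<inter> S"
    using C assms vec.span_minimal vec.subspace_inter by blast
  then have "vec.span D \<inter> S \<subseteq> {0}"
    using span_Int_span_le_0[OF indep] D vec.span_minimal[of D F] B(2) assms(1) by blast
  moreover have "vec.span D \<subseteq> F"
    using D B(2) assms(1) by (intro vec.span_minimal) auto
  moreover have "vec.dim (vec.span D) = r"
    using D(2) indep vec.independent_mono vec.dim_span_eq_card_independent by blast
  ultimately show ?thesis using that vec.subspace_span by blast
qed

lemma Int_span_insert: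
  fixes F S :: "('a::field ^ 'n) set"
  assumes "vec.subspace F" "vec.subspace S" "w \<in> F"
  shows "F \<inter> vec.span (insert w S) = vec.span (insert w (F \<inter> S))"
proof
  show "F \<inter> vec.span (insert w S) \<subseteq> vec.span (insert w (F \<inter> S))"
  proof
    fix x assume x: "x \<in> F \<inter> vec.span (insert w S)"
    then obtain c where c: "x - c *s w \<in> S"
      using vec.span_breakdown_eq vec.span_eq_iff assms(2) by blast
    have "x - c *s w \<in> F" using x assms by (auto intro: vec.subspace_diff vec.subspace_scale)
    with c have "x - c *s w \<in> vec.span (F \<inter> S)" by (simp add: vec.span_base)
    then show "x \<in> vec.span (insert w (F \<inter> S))" using vec.span_breakdown_eq by blast
  qed
  show "vec.span (insert w (F \<inter> S)) \<subseteq> F \<inter> vec.span (insert w S)"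
    using assms vec.span_minimal[of "insert w (F \<inter> S)" F] vec.span_mono[of "insert w (F \<inter> S)" "insert w S"]
    by auto
qed

lemma dim_span_insert_notin:
  fixes S :: "('a::field ^ 'n) set"
  assumes "vec.subspace S" "w \<notin> S"
  shows "vec.dim (vec.span (insert w S)) = vec.dim S + 1"
  using assms vec.span_eq_iff vec.dim_insert by (metis vec.dim_span)

lemma double_counting_exists_ge:
  fixes X :: "'b set" and W :: "'c set" and P :: "'c \<Rightarrow> 'b \<Rightarrow> bool"
  assumes "finite X" "finite W" "W \<noteq> {}" "\<And>G. G \<in> X \<Longrightarrow> c \<le> card {w\<in>W. P w G}"
  shows "\<exists>w\<in>W. c * card X \<le> card W * card {G\<in>X. P w G}"
proof -
  define f where "f w = card {G\<in>X. P w G}" for w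
  have "Max (f ` W) \<in> f ` W" using assms(2,3) by simp
  then obtain w where w: "w \<in> W" "f w = Max (f ` W)" by auto
  have "c * card X = (\<Sum>G\<in>X. c)" by simp
  also have "\<dots> \<le> (\<Sum>G\<in>X. card {w\<in>W. P w G})" using assms(4) by (rule sum_mono)
  also have "\<dots> = (\<Sum>G\<in>X. \<Sum>w\<in>W. if P w G then 1 else 0)"
    using assms(2) by (simp add: sum.If_cases Int_def)
  also have "\<dots> = (\<Sum>w\<in>W. \<Sum>G\<in>X. if P w G then 1 else 0)" by (rule sum.swap)
  also have "\<dots> = (\<Sum>w\<in>W. f w)"
    using assms(1) by (simp add: f_def sum.If_cases Int_def)
  also have "\<dots> \<le> (\<Sum>w'\<in>W. f w)"
    using w assms(2) by (intro sum_mono) simp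
  also have "\<dots> = card W * f w" by simp
  finally show ?thesis using w(1) unfolding f_def by blast
qed

lemma exists_span_insert_bound:
  fixes \<G> :: "('a::{field,finite} ^ 'n) set set" and F S :: "('a ^ 'n) set"
  assumes F: "vec.subspace F" "vec.dim F = k" and "t \<le> k"
    and \<G>: "\<And>G. G \<in> \<G> \<Longrightarrow> vec.subspace G \<and> t \<le> vec.dim (F \<inter> G)"
    and S: "vec.subspace S" "vec.dim (F \<inter> S) < t"
  shows "\<exists>w\<in>F - S. real (card (fam_containing \<G> S))
           \<le> gauss_binom CARD('a) (k - t + 1) 1 * real (card (fam_containing \<G> (vec.span (insert w S))))"
proof -
  define q where "q = CARD('a)"
  define r where "r = k - t + 1"
  have "r + vec.dim (F \<inter> S) \<le> vec.dim F" using F(2) S(2) \<open>t \<le> k\<close> unfolding r_def by linarith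
  then obtain Y where Y: "vec.subspace Y" "Y \<subseteq> F" "Y \<inter> S \<subseteq> {0}" "vec.dim Y = r"
    using subspace_complement_exists[OF F(1) S(1)] by blast
  define W where "W = Y - {0}"
  have "W \<noteq> {}" using Y(4) vec.dim_eq_0[of Y] unfolding W_def r_def by auto
  have "0 \<in> Y" using Y(1) vec.subspace_0 by blast
  then have "card W + 1 = card Y"
    unfolding W_def using card_gt_0_iff[of Y] by (auto simp: card_Diff_singleton)
  then have card_W: "card W + 1 \<le> q ^ r"
    using card_subspace_le[OF Y(1)] Y(4) unfolding q_def by simp
  have "real (card W) \<le> real q ^ r - 1"
    using of_nat_mono[OF card_W, where 'a=real] by simp
  have "q - 1 \<le> card {w\<in>W. w \<in> G}" if "G \<in> fam_containing \<G> S" for G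
  proof -
    have G: "vec.subspace G" "t \<le> vec.dim (F \<inter> G)"
      using \<G> that unfolding fam_containing_def by auto
    then have "q - 1 \<le> card (G \<inter> Y - {0})"
      using F Y(1,2,4) \<open>t \<le> k\<close> unfolding q_def r_def by (intro card_nonzero_Int_ge) auto
    also have "\<dots> \<le> card {w\<in>W. w \<in> G}" unfolding W_def by (intro card_mono) auto
    finally show ?thesis .
  qed
  then have "\<exists>w\<in>W. (q - 1) * card (fam_containing \<G> S) \<le> card W * card {G\<in>fam_containing \<G> S. w \<in> G}"
    using \<open>W \<noteq> {}\<close> by (intro double_counting_exists_ge) auto
  then obtain w where "w \<in> W"
    and bound: "(q - 1) * card (fam_containing \<G> S) \<le> card W * card {G\<in>fam_containing \<G> S. w \<in> G}"
    by blast
  have "w \<in> F - S" using \<open>w \<in> W\<close> Y(2,3) unfolding W_def by auto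
  have "vec.span (insert w S) \<subseteq> G \<longleftrightarrow> w \<in> G \<and> S \<subseteq> G" if "vec.subspace G" for G
    using that vec.span_minimal[of "insert w S" G] vec.span_superset[of "insert w S"] by auto
  then have "{G\<in>fam_containing \<G> S. w \<in> G} = fam_containing \<G> (vec.span (insert w S))"
    using \<G> unfolding fam_containing_def by blast
  with of_nat_mono[OF bound, where 'a=real] have "real (q - 1) * card (fam_containing \<G> S)
      \<le> real (card W) * card (fam_containing \<G> (vec.span (insert w S)))"
    by simp
  also have "\<dots> \<le> (real q ^ r - 1) * card (fam_containing \<G> (vec.span (insert w S)))"
    using \<open>real (card W) \<le> real q ^ r - 1\<close> by (intro mult_right_mono) simp_all
  finally have "real (q - 1) * card (fam_containing \<G> S)
      \<le> (real q ^ r - 1) * card (fam_containing \<G> (vec.span (insert w S)))" .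
  moreover have "real (q - 1) = real q - 1" "real q - 1 > 0"
    using card_field_ge_2[where 'a='a] unfolding q_def by (simp_all add: of_nat_diff)
  ultimately have "real (card (fam_containing \<G> S))
      \<le> (real q ^ r - 1) / (real q - 1) * card (fam_containing \<G> (vec.span (insert w S)))"
    by (simp add: pos_le_divide_eq mult.commute)
  then show ?thesis using \<open>w \<in> F - S\<close> unfolding gauss_binom_1 q_def r_def by blast
qed

lemma exists_superspace_bound:
  fixes \<G> :: "('a::{field,finite} ^ 'n) set set" and F S :: "('a ^ 'n) set"
  assumes F: "vec.subspace F" "vec.dim F = k" and "t \<le> k"
    and \<G>: "\<And>G. G \<in> \<G> \<Longrightarrow> vec.subspace G \<and> t \<le> vec.dim (F \<inter> G)"
  shows "vec.subspace S \<Longrightarrow> vec.dim (F \<inter> S) + j \<le> t \<Longrightarrow>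
    \<exists>R. vec.subspace R \<and> vec.dim R = vec.dim S + j \<and> S \<subseteq> R \<and>
      real (card (fam_containing \<G> S))
        \<le> gauss_binom CARD('a) (k - t + 1) 1 ^ j * real (card (fam_containing \<G> R))"
proof (induction j arbitrary: S)
  case 0
  then show ?case by auto
next
  case (Suc j)
  let ?B = "gauss_binom CARD('a) (k - t + 1) 1"
  obtain w where w: "w \<in> F" "w \<notin> S"
    and step: "real (card (fam_containing \<G> S))
      \<le> ?B * real (card (fam_containing \<G> (vec.span (insert w S))))"
    using exists_span_insert_bound[OF F \<open>t \<le> k\<close> \<G> Suc.prems(1)] Suc.prems(2) by auto
  define T where "T = vec.span (insert w S)"
  have "S \<subseteq> T" unfolding T_def using vec.span_superset by blast
  have "F \<inter> T = vec.span (insert w (F \<inter> S))"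
    unfolding T_def using F(1) Suc.prems(1) w(1) by (rule Int_span_insert)
  then have "vec.dim (F \<inter> T) = vec.dim (F \<inter> S) + 1"
    using dim_span_insert_notin[of "F \<inter> S" w] F(1) Suc.prems(1) w by (simp add: vec.subspace_inter)
  then obtain R where R: "vec.subspace R" "vec.dim R = vec.dim T + j" "T \<subseteq> R"
    and IH: "real (card (fam_containing \<G> T)) \<le> ?B ^ j * real (card (fam_containing \<G> R))"
    using Suc.IH[of T] Suc.prems(2) unfolding T_def by auto
  have "vec.dim T = vec.dim S + 1"
    unfolding T_def using Suc.prems(1) w(2) by (rule dim_span_insert_notin)
  have "real (card (fam_containing \<G> S)) \<le> ?B * (?B ^ j * real (card (fam_containing \<G> R)))"
    using step IH mult_left_mono[OF IH gauss_binom_1_nonneg[of "CARD('a)" "k - t + 1"]] unfolding T_def by linarith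
  then show ?case
    using R \<open>vec.dim T = vec.dim S + 1\<close> \<open>S \<subseteq> T\<close> by (intro exI[of _ R]) auto
qed

lemma almost_t_intersecting_card_fam_containing:
  fixes \<F> :: "('a::{field,finite} ^ 'n) set set" and F S :: "('a ^ 'n) set"
  assumes "almost_t_intersecting t \<F>" "F \<in> \<F>"
  shows "card (fam_containing \<F> S) \<le> card (fam_containing {G\<in>\<F>. t \<le> vec.dim (F \<inter> G)} S) + 1"
proof -
  have covered: "fam_containing \<F> S
      \<subseteq> fam_containing {G\<in>\<F>. t \<le> vec.dim (F \<inter> G)} S \<union> {G\<in>\<F>. vec.dim (F \<inter> G) < t}"
    unfolding fam_containing_def by auto
  then have "card (fam_containing \<F> S)
      \<le> card (fam_containing {G\<in>\<F>. t \<le> vec.dim (F \<inter> G)} S) + card {G\<in>\<F>. vec.dim (F \<inter> G) < t}"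
    using card_mono[OF _ covered] card_Un_le by (meson finite order_trans)
  moreover have "card {G\<in>\<F>. vec.dim (F \<inter> G) < t} \<le> 1"
    using assms unfolding almost_t_intersecting_def by blast
  ultimately show ?thesis by linarith
qed

theorem lemma3p2:
  fixes \<F> :: "('a::{field,finite} ^ 'n) set set" and S F :: "('a ^ 'n) set"
    and k t s m :: nat
  assumes "0 < k" "0 < t" "0 < s" "k \<ge> t + 1" "CARD('n) \<ge> 2 * k"
    and "\<F> \<subseteq> subspaces_dim k"
    and "almost_t_intersecting t \<F>"
    and "S \<in> subspaces_dim s"
    and "F \<in> \<F>" and "vec.dim (F \<inter> S) = m" and "m < t"
  shows "\<exists>R \<in> subspaces_dim (s + t - m). S \<subseteq> R \<and>
           real (card (fam_containing \<F> S))
             \<le> gauss_binom CARD('a) (k - t + 1) 1 ^ (t - m) * real (card (fam_containing \<F> R)) + 1"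
proof -
  let ?B = "gauss_binom CARD('a) (k - t + 1) 1"
  define \<G> where "\<G> = {G\<in>\<F>. t \<le> vec.dim (F \<inter> G)}"
  have F: "vec.subspace F" "vec.dim F = k" and S: "vec.subspace S" "vec.dim S = s"
    using assms(6,8,9) unfolding subspaces_dim_def by auto
  have \<G>: "\<And>G. G \<in> \<G> \<Longrightarrow> vec.subspace G \<and> t \<le> vec.dim (F \<inter> G)"
    using assms(6) unfolding \<G>_def subspaces_dim_def by auto
  have "t \<le> k" "vec.dim (F \<inter> S) + (t - m) \<le> t" using assms(4,10,11) by simp_all
  then obtain R where R: "vec.subspace R" "vec.dim R = vec.dim S + (t - m)" "S \<subseteq> R"
    and bound: "real (card (fam_containing \<G> S)) \<le> ?B ^ (t - m) * real (card (fam_containing \<G> R))"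
    using exists_superspace_bound[OF F _ \<G> S(1)] by blast
  have "card (fam_containing \<G> R) \<le> card (fam_containing \<F> R)"
    unfolding fam_containing_def \<G>_def by (intro card_mono) auto
  then have "?B ^ (t - m) * card (fam_containing \<G> R) \<le> ?B ^ (t - m) * card (fam_containing \<F> R)"
    using gauss_binom_1_nonneg by (simp add: mult_left_mono)
  moreover have "card (fam_containing \<F> S) \<le> card (fam_containing \<G> S) + 1"
    unfolding \<G>_def using assms(7,9) by (rule almost_t_intersecting_card_fam_containing)
  ultimately have "real (card (fam_containing \<F> S)) \<le> ?B ^ (t - m) * card (fam_containing \<F> R) + 1"
    using bound by linarith
  moreover have "R \<in> subspaces_dim (s + t - m)"
    using R S(2) assms(11) unfolding subspaces_dim_def by auto
  ultimately show ?thesis using R(3) by blast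
qed

end
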